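(* Let $n,N\ge1$ and positive integers $r_1,\dots,r_N,r$ with $r_i\le r\le\lfloor(n-1)/2\rfloor$. Consider either (a) $d=n$, $p=r_i+1$, $q=n-r_i$ for some $i$, and $\mathcal{A}(y)=\mathcal{H}_{r_i+1}(y)$; or (b) $d=Nn$, $p=r+1$, $q=N(n-r)$, $\mathcal{A}(y)=[\mathcal{H}_{r+1}(y_1)\cdots\mathcal{H}_{r+1}(y_N)]$ for $y=(y_1^\top,\dots,y_N^\top)^\top$. Fix $\hat y\in\mathbb{R}^d$ and define, for $R\in\mathbb{R}^{1\times p}$, $$\Psi(R)=\inf_{y\in\mathbb{R}^d}\Big\{\tfrac12\|y-\hat y\|^2:\ R\mathcal{A}(y)=0\Big\}.$$ Then $\Psi$ is smooth on $\mathbb{R}^{1\times p}\setminus\{0\}$.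
   Context: For $x\in\mathbb{R}^n$ and $1\le l\le n$, $\mathcal{H}_l(x)\in\mathbb{R}^{l\times(n-l+1)}$ is the Hankel matrix with $(i,j)$ entry $x(i+j-1)$. *)

theory Defs
  imports "HOL-Analysis.Analysis"
begin

text \<open>For open S this is exactly: all iterated partial derivatives of all orders
exist and are continuous on S.\<close>
definition smooth_on :: "'a::euclidean_space set \<Rightarrow> ('a \<Rightarrow> real) \<Rightarrow> bool" where
  "smooth_on S f \<longleftrightarrow>
     (\<exists>F. f \<in> F \<and>
        (\<forall>g\<in>F. \<exists>D. (\<forall>i\<in>Basis. D i \<in> F) \<and>
             (\<forall>x\<in>S. (g has_derivative (\<lambda>h. \<Sum>i\<in>Basis. (h \<bullet> i) * D i x)) (at x))))"

text \<open>Hankel matrix H_l(x), x in R^n, with 0-based indices: entry (i,j) = x(i+j)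
 for i < l, j < n - l + 1 (the size l x (n-l+1) is supplied separately).\<close>
definition hankel :: "(nat \<Rightarrow> real) \<Rightarrow> nat \<Rightarrow> nat \<Rightarrow> real" where
  "hankel x i j = x (i + j)"

text \<open>Block Hankel matrix [H_l(y_1) ... H_l(y_N)] for y in R^(N n), where (0-based)
 block m is y_m(t) = y(m n + t), t < n.\<close>
definition block_hankel :: "nat \<Rightarrow> nat \<Rightarrow> (nat \<Rightarrow> real) \<Rightarrow> nat \<Rightarrow> nat \<Rightarrow> real" where
  "block_hankel n l y i c =
     hankel (\<lambda>t. y ((c div (n - l + 1)) * n + t)) i (c mod (n - l + 1))"

text \<open>Psi(R) = inf { 1/2 ||y - yhat||^2 : y in R^d, R A(y) = 0 }, where R is a
 1 x p row vector (indices < p), A(y) is p x q (indices < p, < q), vectors in R^d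
 are functions nat => real vanishing from index d on.\<close>
definition Psi :: "nat \<Rightarrow> nat \<Rightarrow> nat \<Rightarrow> ((nat \<Rightarrow> real) \<Rightarrow> nat \<Rightarrow> nat \<Rightarrow> real)
                   \<Rightarrow> (nat \<Rightarrow> real) \<Rightarrow> (nat \<Rightarrow> real) \<Rightarrow> real" where
  "Psi d p q A yhat R =
     Inf {(1/2) * (\<Sum>k<d. (y k - yhat k)^2) | y.
            (\<forall>k\<ge>d. y k = 0) \<and> (\<forall>c<q. (\<Sum>j<p. R j * A y j c) = 0)}"

end

(* For R <> 0 the constraint R A(y) = 0 reads M y = 0, where the rows of the matrix M = M(R)
   are copies of R shifted by strictly increasing offsets.  Such rows are linearly independent
   (compare the first row with a nonzero coefficient against the first nonzero entry of R), so
   Psi(R) is half the squared distance from yhat to ker M, i.e. b' G^-1 b / 2 with b = M yhat and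
   the invertible Gram matrix G = M M'.  By Cramer's rule this is b' adj(G) b / (2 det G), a
   quotient of polynomials in R with nonvanishing denominator; such quotients are smooth because
   their partial derivatives are quotients of the same kind. *)

theory Submission
  imports Defs "Jordan_Normal_Form.Determinant"
begin

no_notation vec_index (infixl "$" 100)
no_notation scalar_prod (infix "\<bullet>" 70)

section \<open>Smoothness of rational functions\<close>

lemma has_derivative_partials:
  fixes f :: "'a::euclidean_space \<Rightarrow> real"
  assumes "(f has_derivative f') F"
  shows "(f has_derivative (\<lambda>h. \<Sum>i\<in>Basis. (h \<bullet> i) * f' i)) F"
proof -
  have lin: "linear f'" using assms by (rule has_derivative_linear)
  have "f' = (\<lambda>h. \<Sum>i\<in>Basis. (h \<bullet> i) * f' i)"
  proof
    fix h
    have "f' h = f' (\<Sum>i\<in>Basis. (h \<bullet> i) *\<^sub>R i)" by (simp only: euclidean_representation)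
    also have "\<dots> = (\<Sum>i\<in>Basis. (h \<bullet> i) * f' i)"
      by (simp add: linear_sum[OF lin] linear_scale[OF lin])
    finally show "f' h = (\<Sum>i\<in>Basis. (h \<bullet> i) * f' i)" .
  qed
  then show ?thesis using assms by simp
qed

lemma real_polynomial_function_has_derivative:
  fixes f :: "'a::euclidean_space \<Rightarrow> real"
  assumes "real_polynomial_function f"
  obtains f' where "\<And>h. real_polynomial_function (\<lambda>x. f' x h)" and "\<And>x. (f has_derivative f' x) (at x)"
  using assms
proof (induction arbitrary: thesis)
  case (linear f)
  show ?case by (rule linear.prems[of "\<lambda>x. f"]) (auto intro: bounded_linear_imp_has_derivative linear.hyps)
next
  case (const c)
  show ?case by (rule const[of "\<lambda>x h. 0"]) auto
next
  case (add f g)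
  obtain f' g' where "\<And>h. real_polynomial_function (\<lambda>x. f' x h)" "\<And>x. (f has_derivative f' x) (at x)"
    "\<And>h. real_polynomial_function (\<lambda>x. g' x h)" "\<And>x. (g has_derivative g' x) (at x)"
    using add.IH by metis
  then show ?case by (intro add.prems[of "\<lambda>x h. f' x h + g' x h"]) (auto intro: derivative_intros)
next
  case (mult f g)
  obtain f' g' where "\<And>h. real_polynomial_function (\<lambda>x. f' x h)" "\<And>x. (f has_derivative f' x) (at x)"
    "\<And>h. real_polynomial_function (\<lambda>x. g' x h)" "\<And>x. (g has_derivative g' x) (at x)"
    using mult.IH by metis
  then show ?case
    using mult.hyps
    by (intro mult.prems[of "\<lambda>x h. f x * g' x h + f' x h * g x"] has_derivative_mult
          real_polynomial_function.intros(3,4))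
qed

lemma has_derivative_divide_power:
  fixes P Q :: "'a::real_normed_vector \<Rightarrow> real"
  assumes P: "(P has_derivative P') (at x)" and Q: "(Q has_derivative Q') (at x)" and "Q x \<noteq> 0"
  shows "((\<lambda>x. P x / Q x ^ k) has_derivative
           (\<lambda>h. (P' h * Q x - of_nat k * P x * Q' h) / Q x ^ Suc k)) (at x)"
proof -
  have "((\<lambda>x. P x / Q x ^ k) has_derivative
      (\<lambda>h. - P x * (inverse (Q x ^ k) * (of_nat k * Q' h * Q x ^ (k - 1)) * inverse (Q x ^ k)) + P' h / Q x ^ k)) (at x)"
    using assms by (intro has_derivative_divide has_derivative_power) auto
  moreover have "- P x * (inverse (Q x ^ k) * (of_nat k * Q' h * Q x ^ (k - 1)) * inverse (Q x ^ k)) + P' h / Q x ^ k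
      = (P' h * Q x - of_nat k * P x * Q' h) / Q x ^ Suc k" for h
    using \<open>Q x \<noteq> 0\<close> by (cases k) (simp_all add: field_simps power_add)
  ultimately show ?thesis by simp
qed

lemma smooth_on_rational:
  fixes P Q :: "'a::euclidean_space \<Rightarrow> real"
  assumes P: "real_polynomial_function P" and Q: "real_polynomial_function Q"
    and nonzero: "\<And>x. x \<in> S \<Longrightarrow> Q x \<noteq> 0"
  shows "smooth_on S (\<lambda>x. P x / Q x)"
proof -
  \<comment> \<open>closed under partial derivatives by the quotient rule\<close>
  define F where "F = {(\<lambda>x. P' x / Q x ^ k) | P' k. real_polynomial_function P'}"
  obtain Q' where Q': "\<And>h. real_polynomial_function (\<lambda>x. Q' x h)" "\<And>x. (Q has_derivative Q' x) (at x)"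
    using real_polynomial_function_has_derivative[OF Q] by blast
  have "\<exists>D. (\<forall>i\<in>Basis. D i \<in> F) \<and>
           (\<forall>x\<in>S. (g has_derivative (\<lambda>h. \<Sum>i\<in>Basis. (h \<bullet> i) * D i x)) (at x))"
    if "g \<in> F" for g
  proof -
    from that obtain P' k where g: "g = (\<lambda>x. P' x / Q x ^ k)" and P': "real_polynomial_function P'"
      unfolding F_def by blast
    obtain P'' where P'': "\<And>h. real_polynomial_function (\<lambda>x. P'' x h)" "\<And>x. (P' has_derivative P'' x) (at x)"
      using real_polynomial_function_has_derivative[OF P'] by blast
    define N where "N i x = P'' x i * Q x - of_nat k * P' x * Q' x i" for i x
    define D where "D i x = N i x / Q x ^ Suc k" for i x
    have "real_polynomial_function (N i)" for i
      unfolding N_def using P'' Q' P' Q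
      by (intro real_polynomial_function_diff real_polynomial_function.intros(2-4))
    then have "D i \<in> F" for i
      unfolding F_def D_def by blast
    moreover have "(g has_derivative (\<lambda>h. \<Sum>i\<in>Basis. (h \<bullet> i) * D i x)) (at x)" if "x \<in> S" for x
      unfolding g D_def N_def using P'' Q' nonzero[OF that]
      by (intro has_derivative_partials has_derivative_divide_power) auto
    ultimately show ?thesis by blast
  qed
  moreover have "(\<lambda>x. P x / Q x) \<in> F"
    unfolding F_def using P by (intro CollectI exI[of _ P] exI[of _ 1]) auto
  ultimately show ?thesis
    unfolding smooth_on_def by blast
qed

lemma smooth_on_cong:
  assumes "smooth_on S g" and "open S" and "\<And>x. x \<in> S \<Longrightarrow> f x = g x"
  shows "smooth_on S f"
proof -
  obtain F where "g \<in> F" and F: "\<forall>h\<in>F. \<exists>D. (\<forall>i\<in>Basis. D i \<in> F) \<and>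
      (\<forall>x\<in>S. (h has_derivative (\<lambda>v. \<Sum>i\<in>Basis. (v \<bullet> i) * D i x)) (at x))"
    using assms(1) unfolding smooth_on_def by blast
  then obtain D where D: "\<forall>i\<in>Basis. D i \<in> F"
    and g: "\<And>x. x \<in> S \<Longrightarrow> (g has_derivative (\<lambda>v. \<Sum>i\<in>Basis. (v \<bullet> i) * D i x)) (at x)"
    by blast
  have "(f has_derivative (\<lambda>v. \<Sum>i\<in>Basis. (v \<bullet> i) * D i x)) (at x)" if "x \<in> S" for x
    using has_derivative_transform_within_open[OF g[OF that] assms(2) that] assms(3) by simp
  then show ?thesis
    unfolding smooth_on_def using F D by (intro exI[of _ "insert f F"]) blast
qed

section \<open>Polynomiality of determinants and adjugates\<close>

lemma real_polynomial_function_det: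
  assumes A: "\<And>x. A x \<in> carrier_mat n n"
    and entries: "\<And>i j. i < n \<Longrightarrow> j < n \<Longrightarrow> real_polynomial_function (\<lambda>x. A x $$ (i, j))"
  shows "real_polynomial_function (\<lambda>x. Determinant.det (A x))"
proof -
  have "real_polynomial_function
      (\<lambda>x. \<Sum>p\<in>{p. p permutes {0..<n}}. signof p * (\<Prod>i = 0..<n. A x $$ (i, p i)))"
    using entries by (intro real_polynomial_function_sum real_polynomial_function.intros(2,4)
        real_polynomial_function_prod finite_permutations finite_atLeastLessThan)
      (auto simp: permutes_in_image)
  then show ?thesis
    using det_def'[OF A] by simp
qed

lemma real_polynomial_function_adj_mat:
  assumes A: "\<And>x. A x \<in> carrier_mat n n"
    and entries: "\<And>i j. i < n \<Longrightarrow> j < n \<Longrightarrow> real_polynomial_function (\<lambda>x. A x $$ (i, j))"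
    and "i < n" and "j < n"
  shows "real_polynomial_function (\<lambda>x. adj_mat (A x) $$ (i, j))"
proof -
  have minor: "real_polynomial_function (\<lambda>x. Determinant.det (mat_delete (A x) j i))"
  proof (rule real_polynomial_function_det)
    show "mat_delete (A x) j i \<in> carrier_mat (n - 1) (n - 1)" for x
      using A by (rule mat_delete_carrier)
    fix i' j' assume "i' < n - 1" "j' < n - 1"
    then have "mat_delete (A x) j i $$ (i', j') =
        A x $$ (if i' < j then i' else Suc i', if j' < i then j' else Suc j')" for x
      using A[of x] by (simp add: mat_delete_def)
    then show "real_polynomial_function (\<lambda>x. mat_delete (A x) j i $$ (i', j'))"
      using entries \<open>i' < n - 1\<close> \<open>j' < n - 1\<close> \<open>i < n\<close> \<open>j < n\<close> by simp
  qed
  have "adj_mat (A x) $$ (i, j) = (-1) ^ (j + i) * Determinant.det (mat_delete (A x) j i)" for x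
    using A[of x] \<open>i < n\<close> \<open>j < n\<close> by (simp add: adj_mat_def cofactor_def)
  then show ?thesis
    using minor by (simp add: real_polynomial_function.intros(2,4))
qed

section \<open>Least squares under linear constraints\<close>

definition gram_mat :: "nat \<Rightarrow> nat \<Rightarrow> (nat \<Rightarrow> nat \<Rightarrow> real) \<Rightarrow> real mat" where
  "gram_mat q d M = mat q q (\<lambda>(c, c'). \<Sum>k<d. M c k * M c' k)"

definition rows_independent :: "nat \<Rightarrow> nat \<Rightarrow> (nat \<Rightarrow> nat \<Rightarrow> real) \<Rightarrow> bool" where
  "rows_independent q d M \<longleftrightarrow> (\<forall>z. (\<forall>k<d. (\<Sum>c<q. z c * M c k) = 0) \<longrightarrow> (\<forall>c<q. z c = 0))"

lemma gram_mat_carrier: "gram_mat q d M \<in> carrier_mat q q"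
  by (simp add: gram_mat_def)

lemma sum_mult_transpose:
  fixes M :: "nat \<Rightarrow> nat \<Rightarrow> 'a::comm_semiring_0"
  shows "(\<Sum>k<d. a k * (\<Sum>c<q. v c * M c k)) = (\<Sum>c<q. v c * (\<Sum>k<d. M c k * a k))"
proof -
  have "(\<Sum>k<d. a k * (\<Sum>c<q. v c * M c k)) = (\<Sum>k<d. \<Sum>c<q. v c * (M c k * a k))"
    unfolding sum_distrib_left by (simp add: mult_ac)
  also have "\<dots> = (\<Sum>c<q. \<Sum>k<d. v c * (M c k * a k))"
    by (rule sum.swap)
  finally show ?thesis
    by (simp add: sum_distrib_left)
qed

lemma sum_row_mult_lincomb_rows:
  fixes M :: "nat \<Rightarrow> nat \<Rightarrow> 'a::comm_semiring_0"
  shows "(\<Sum>k<d. M c k * (\<Sum>c'<q. z c' * M c' k)) = (\<Sum>c'<q. (\<Sum>k<d. M c k * M c' k) * z c')"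
  unfolding sum_mult_transpose by (simp add: mult.commute)

lemma sum_square_lincomb_rows:
  fixes M :: "nat \<Rightarrow> nat \<Rightarrow> 'a::comm_semiring_1"
  shows "(\<Sum>k<d. (\<Sum>c<q. z c * M c k)\<^sup>2) = (\<Sum>c<q. z c * (\<Sum>c'<q. (\<Sum>k<d. M c k * M c' k) * z c'))"
  using sum_mult_transpose[where a = "\<lambda>k. \<Sum>c<q. z c * M c k" and v = z]
  by (simp add: power2_eq_square sum_row_mult_lincomb_rows)

lemma det_gram_mat_nonzero:
  assumes "rows_independent q d M"
  shows "Determinant.det (gram_mat q d M) \<noteq> 0"
proof
  assume "Determinant.det (gram_mat q d M) = 0"
  then obtain v where v: "v \<in> carrier_vec q" "v \<noteq> 0\<^sub>v q" "gram_mat q d M *\<^sub>v v = 0\<^sub>v q"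
    using det_0_iff_vec_prod_zero[OF gram_mat_carrier] by blast
  have "(\<Sum>c'<q. (\<Sum>k<d. M c k * M c' k) * vec_index v c') = 0" if "c < q" for c
    using arg_cong[OF v(3), of "\<lambda>w. vec_index w c"] that v(1)
    by (simp add: gram_mat_def scalar_prod_def atLeast0LessThan)
  then have "(\<Sum>k<d. (\<Sum>c<q. vec_index v c * M c k)\<^sup>2) = 0"
    by (simp add: sum_square_lincomb_rows)
  then have "\<forall>k<d. (\<Sum>c<q. vec_index v c * M c k) = 0"
    by (simp add: sum_nonneg_eq_0_iff)
  then have "v = 0\<^sub>v q"
    using assms v(1) unfolding rows_independent_def by (intro eq_vecI) auto
  with v(2) show False ..
qed

lemma gram_mat_mult_adj_mat:
  assumes "c < q"
  shows "(\<Sum>c'<q. (\<Sum>k<d. M c k * M c' k) * (\<Sum>c''<q. adj_mat (gram_mat q d M) $$ (c', c'') * b c''))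
       = Determinant.det (gram_mat q d M) * b c"
proof -
  let ?G = "gram_mat q d M" and ?A = "adj_mat (gram_mat q d M)"
  have GA: "(\<Sum>c'<q. (\<Sum>k<d. M c k * M c' k) * ?A $$ (c', c'')) = Determinant.det ?G * of_bool (c = c'')"
    if "c'' < q" for c''
  proof -
    have "(?G * ?A) $$ (c, c'') = (Determinant.det ?G \<cdot>\<^sub>m 1\<^sub>m q) $$ (c, c'')"
      using adj_mat(2)[OF gram_mat_carrier] by simp
    then show ?thesis
      using adj_mat(1)[OF gram_mat_carrier[of q d M]] assms that
      by (simp add: gram_mat_def scalar_prod_def atLeast0LessThan)
  qed
  have "(\<Sum>c'<q. (\<Sum>k<d. M c k * M c' k) * (\<Sum>c''<q. ?A $$ (c', c'') * b c''))
      = (\<Sum>c''<q. (\<Sum>c'<q. (\<Sum>k<d. M c k * M c' k) * ?A $$ (c', c'')) * b c'')"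
    by (simp add: sum_distrib_left sum_distrib_right mult_ac) (rule sum.swap)
  also have "\<dots> = (\<Sum>c''<q. Determinant.det ?G * of_bool (c = c'') * b c'')"
    using GA by simp
  also have "\<dots> = Determinant.det ?G * b c"
    using assms by (simp add: of_bool_def if_distrib if_distribR sum.If_cases)
  finally show ?thesis .
qed

lemma Inf_half_sq_dist_kernel:
  fixes M :: "nat \<Rightarrow> nat \<Rightarrow> real"
  assumes normal_eq: "\<And>c. c < q \<Longrightarrow> (\<Sum>c'<q. (\<Sum>k<d. M c k * M c' k) * v c') = (\<Sum>k<d. M c k * yh k)"
  shows "Inf {(1/2) * (\<Sum>k<d. (y k - yh k)\<^sup>2) | y. (\<forall>k\<ge>d. y k = 0) \<and> (\<forall>c<q. (\<Sum>k<d. M c k * y k) = 0)}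
       = (1/2) * (\<Sum>c<q. v c * (\<Sum>k<d. M c k * yh k))"
proof -
  define t where "t k = (\<Sum>c<q. v c * M c k)" for k
  \<comment> \<open>\<open>y0 = yh - M\<^sup>T v\<close> is the orthogonal projection of \<open>yh\<close> onto the kernel of \<open>M\<close>\<close>
  define y0 where "y0 k = (if k < d then yh k - t k else 0)" for k
  have Mt: "(\<Sum>k<d. M c k * t k) = (\<Sum>k<d. M c k * yh k)" if "c < q" for c
    using normal_eq[OF that] by (simp add: t_def sum_row_mult_lincomb_rows)
  have y0_feasible: "(\<Sum>k<d. M c k * y0 k) = 0" if "c < q" for c
  proof -
    have "(\<Sum>k<d. M c k * y0 k) = (\<Sum>k<d. M c k * yh k - M c k * t k)"
      by (intro sum.cong refl) (simp add: y0_def algebra_simps)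
    then show ?thesis
      using Mt[OF that] by (simp add: sum_subtractf)
  qed
  have t_sq: "(\<Sum>k<d. (t k)\<^sup>2) = (\<Sum>c<q. v c * (\<Sum>k<d. M c k * yh k))"
    using sum_mult_transpose[where a = t and v = v and M = M and q = q and d = d, folded t_def] Mt
    by (simp add: power2_eq_square)
  have lower: "(\<Sum>k<d. (t k)\<^sup>2) \<le> (\<Sum>k<d. (y k - yh k)\<^sup>2)"
    if y: "\<forall>c<q. (\<Sum>k<d. M c k * y k) = 0" for y
  proof -
    have "(\<Sum>k<d. M c k * (y k - y0 k)) = 0" if "c < q" for c
      using y y0_feasible[OF that] that by (simp add: right_diff_distrib sum_subtractf)
    then have cross: "(\<Sum>k<d. (y k - y0 k) * t k) = 0"
      using sum_mult_transpose[where a = "\<lambda>k. y k - y0 k" and v = v] by (simp add: t_def)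
    have "(\<Sum>k<d. (y k - yh k)\<^sup>2) = (\<Sum>k<d. (y k - y0 k)\<^sup>2 - 2 * ((y k - y0 k) * t k) + (t k)\<^sup>2)"
      by (intro sum.cong refl) (simp add: y0_def power2_eq_square algebra_simps)
    also have "\<dots> = (\<Sum>k<d. (y k - y0 k)\<^sup>2) - 2 * (\<Sum>k<d. (y k - y0 k) * t k) + (\<Sum>k<d. (t k)\<^sup>2)"
      by (simp add: sum.distrib sum_subtractf sum_distrib_left)
    finally show ?thesis
      using cross by (simp add: sum_nonneg)
  qed
  have "(1/2) * (\<Sum>k<d. (t k)\<^sup>2) \<in>
      {(1/2) * (\<Sum>k<d. (y k - yh k)\<^sup>2) | y. (\<forall>k\<ge>d. y k = 0) \<and> (\<forall>c<q. (\<Sum>k<d. M c k * y k) = 0)}"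
    using y0_feasible by (intro CollectI exI[of _ y0]) (simp add: y0_def)
  then have "Inf {(1/2) * (\<Sum>k<d. (y k - yh k)\<^sup>2) | y. (\<forall>k\<ge>d. y k = 0) \<and> (\<forall>c<q. (\<Sum>k<d. M c k * y k) = 0)}
      = (1/2) * (\<Sum>k<d. (t k)\<^sup>2)"
    using lower by (intro cInf_eq_minimum) auto
  then show ?thesis
    using t_sq by simp
qed

lemma Inf_half_sq_dist_kernel_adj_mat:
  fixes M :: "nat \<Rightarrow> nat \<Rightarrow> real" and yh :: "nat \<Rightarrow> real"
  assumes "rows_independent q d M"
  defines "b \<equiv> \<lambda>c. \<Sum>k<d. M c k * yh k"
  shows "Inf {(1/2) * (\<Sum>k<d. (y k - yh k)\<^sup>2) | y. (\<forall>k\<ge>d. y k = 0) \<and> (\<forall>c<q. (\<Sum>k<d. M c k * y k) = 0)}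
       = (\<Sum>c<q. b c * (\<Sum>c'<q. adj_mat (gram_mat q d M) $$ (c, c') * b c'))
           / (2 * Determinant.det (gram_mat q d M))"
proof -
  define \<Delta> where "\<Delta> = Determinant.det (gram_mat q d M)"
  define w where "w c = (\<Sum>c'<q. adj_mat (gram_mat q d M) $$ (c, c') * b c')" for c
  have "\<Delta> \<noteq> 0"
    unfolding \<Delta>_def using assms(1) by (rule det_gram_mat_nonzero)
  then have "(\<Sum>c'<q. (\<Sum>k<d. M c k * M c' k) * (w c' / \<Delta>)) = b c" if "c < q" for c
    using gram_mat_mult_adj_mat[OF that, where d = d and M = M and b = b]
    by (simp add: w_def \<Delta>_def sum_divide_distrib[symmetric] mult.assoc[symmetric])
  then have "Inf {(1/2) * (\<Sum>k<d. (y k - yh k)\<^sup>2) | y. (\<forall>k\<ge>d. y k = 0) \<and> (\<forall>c<q. (\<Sum>k<d. M c k * y k) = 0)}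
      = (1/2) * (\<Sum>c<q. w c / \<Delta> * b c)"
    unfolding b_def by (rule Inf_half_sq_dist_kernel)
  also have "\<dots> = (\<Sum>c<q. b c * w c) / (2 * \<Delta>)"
    by (simp add: sum_divide_distrib mult.commute)
  finally show ?thesis
    unfolding w_def \<Delta>_def .
qed

section \<open>Banded constraint matrices\<close>

definition band_mat :: "nat \<Rightarrow> (nat \<Rightarrow> nat) \<Rightarrow> (nat \<Rightarrow> real) \<Rightarrow> nat \<Rightarrow> nat \<Rightarrow> real" where
  "band_mat p s R c k = (if s c \<le> k \<and> k < s c + p then R (k - s c) else 0)"

lemma sum_band_mat:
  assumes "s c + p \<le> d"
  shows "(\<Sum>k<d. band_mat p s R c k * y k) = (\<Sum>j<p. R j * y (s c + j))"
proof -
  have "(\<Sum>k<d. band_mat p s R c k * y k) = (\<Sum>k\<in>{s c..<s c + p}. band_mat p s R c k * y k)"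
    using assms by (intro sum.mono_neutral_right) (auto simp: band_mat_def)
  also have "\<dots> = (\<Sum>k\<in>{s c..<s c + p}. R (k - s c) * y k)"
    by (simp add: band_mat_def)
  also have "\<dots> = (\<Sum>j<p. R j * y (s c + j))"
    using sum.shift_bounds_nat_ivl[of "\<lambda>k. R (k - s c) * y k" 0 "s c" p]
    by (simp add: atLeast0LessThan add.commute)
  finally show ?thesis .
qed

lemma rows_independent_band_mat:
  assumes bound: "\<And>c. c < q \<Longrightarrow> s c + p \<le> d" and mono: "strict_mono_on {..<q} s"
    and "j < p" and "R j \<noteq> 0"
  shows "rows_independent q d (band_mat p s R)"
  unfolding rows_independent_def
proof (rule allI, rule impI, rule ccontr)
  fix z assume lincomb: "\<forall>k<d. (\<Sum>c<q. z c * band_mat p s R c k) = 0" and "\<not> (\<forall>c<q. z c = 0)"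
  then obtain c0 where c0: "c0 < q" "z c0 \<noteq> 0" and below_c0: "\<And>c. c < c0 \<Longrightarrow> z c = 0"
    using exists_least_iff[of "\<lambda>c. c < q \<and> z c \<noteq> 0"] by (metis order.strict_trans)
  obtain j0 where j0: "j0 < p" "R j0 \<noteq> 0" and below_j0: "\<And>j. j < j0 \<Longrightarrow> R j = 0"
    using exists_least_iff[of "\<lambda>j. j < p \<and> R j \<noteq> 0"] assms(3,4) by (metis order.strict_trans)
  define k where "k = s c0 + j0"
  have "k < d"
    using bound[OF c0(1)] j0(1) by (simp add: k_def)
  have others_zero: "z c * band_mat p s R c k = 0" if "c < q" "c \<noteq> c0" for c
  proof (cases "c < c0")
    case True
    then show ?thesis by (simp add: below_c0)
  next
    case False
    then have "s c0 < s c"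
      using mono that c0(1) by (simp add: strict_mono_on_def)
    then show ?thesis
      using below_j0 by (auto simp: band_mat_def k_def)
  qed
  have "(\<Sum>c<q. z c * band_mat p s R c k) = z c0 * band_mat p s R c0 k"
    using c0(1) by (subst sum.remove[of _ c0]) (auto intro!: sum.neutral others_zero)
  also have "\<dots> = z c0 * R j0"
    using j0(1) by (simp add: band_mat_def k_def)
  finally show False
    using lincomb \<open>k < d\<close> c0(2) j0(2) by simp
qed

lemma Psi_eq_Inf_band_mat:
  assumes A: "\<And>y j c. c < q \<Longrightarrow> j < p \<Longrightarrow> A y j c = y (s c + j)"
    and bound: "\<And>c. c < q \<Longrightarrow> s c + p \<le> d"
  shows "Psi d p q A yh R = Inf {(1/2) * (\<Sum>k<d. (y k - yh k)\<^sup>2) | y.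
           (\<forall>k\<ge>d. y k = 0) \<and> (\<forall>c<q. (\<Sum>k<d. band_mat p s R c k * y k) = 0)}"
proof -
  have "(\<Sum>j<p. R j * A y j c) = (\<Sum>k<d. band_mat p s R c k * y k)" if "c < q" for y c
    using A[OF that] sum_band_mat[where s = s and c = c, OF bound[OF that]] by simp
  then show ?thesis
    unfolding Psi_def by (simp cong: conj_cong)
qed

lemma smooth_on_Psi_band_mat:
  fixes e :: "nat \<Rightarrow> 'p::finite"
  assumes e: "bij_betw e {0..<CARD('p)} (UNIV :: 'p set)"
    and A: "\<And>y j c. c < q \<Longrightarrow> j < CARD('p) \<Longrightarrow> A y j c = y (s c + j)"
    and bound: "\<And>c. c < q \<Longrightarrow> s c + CARD('p) \<le> d" and mono: "strict_mono_on {..<q} s"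
  shows "smooth_on (UNIV - {0}) (\<lambda>R :: real^'p. Psi d CARD('p) q A yh (\<lambda>j. R $ e j))"
proof -
  define M where "M R = band_mat CARD('p) s (\<lambda>j. R $ e j)" for R :: "real^'p"
  define b where "b R c = (\<Sum>k<d. M R c k * yh k)" for R c
  define G where "G R = gram_mat q d (M R)" for R
  have M_poly: "real_polynomial_function (\<lambda>R. M R c k)" for c k
  proof (cases "s c \<le> k \<and> k < s c + CARD('p)")
    case True
    then have "(\<lambda>R. M R c k) = (\<lambda>R. R $ e (k - s c))"
      by (simp add: M_def band_mat_def)
    then show ?thesis
      by (simp add: real_polynomial_function.intros(1) bounded_linear_vec_nth)
  next
    case False
    then have "(\<lambda>R. M R c k) = (\<lambda>R. 0)"
      by (auto simp: M_def band_mat_def)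
    then show ?thesis
      by (simp add: real_polynomial_function.intros(2))
  qed
  have G_poly: "real_polynomial_function (\<lambda>R. G R $$ (c, c'))" if "c < q" "c' < q" for c c'
    using that unfolding G_def gram_mat_def
    by (simp, intro real_polynomial_function_sum real_polynomial_function.intros(4) M_poly) auto
  have b_poly: "real_polynomial_function (\<lambda>R. b R c)" for c
    unfolding b_def by (intro real_polynomial_function_sum real_polynomial_function.intros(2,4) M_poly) auto
  have numerator_poly:
    "real_polynomial_function (\<lambda>R. \<Sum>c<q. b R c * (\<Sum>c'<q. adj_mat (G R) $$ (c, c') * b R c'))"
    using G_poly gram_mat_carrier unfolding G_def
    by (intro real_polynomial_function_sum real_polynomial_function.intros(4) b_poly
        real_polynomial_function_adj_mat[where n = q]) auto
  have denominator_poly: "real_polynomial_function (\<lambda>R. 2 * Determinant.det (G R))"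
    using G_poly gram_mat_carrier unfolding G_def
    by (intro real_polynomial_function.intros(2,4) real_polynomial_function_det[where n = q]) auto
  have independent: "rows_independent q d (M R)" if "R \<noteq> 0" for R
  proof -
    obtain i where "R $ i \<noteq> 0"
      using \<open>R \<noteq> 0\<close> by (metis Finite_Cartesian_Product.vec_eq_iff Finite_Cartesian_Product.zero_index)
    moreover obtain j where "j < CARD('p)" "e j = i"
      using e by (metis UNIV_I atLeastLessThan_iff bij_betw_iff_bijections)
    ultimately show ?thesis
      unfolding M_def using bound mono by (intro rows_independent_band_mat) auto
  qed
  show ?thesis
  proof (rule smooth_on_cong[OF smooth_on_rational[OF numerator_poly denominator_poly]])
    show "open (UNIV - {0 :: real^'p})"
      by (simp add: open_Diff)
    fix R :: "real^'p" assume "R \<in> UNIV - {0}"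
    then have indep: "rows_independent q d (M R)"
      by (simp add: independent)
    then show "2 * Determinant.det (G R) \<noteq> 0"
      unfolding G_def by (simp add: det_gram_mat_nonzero)
    have "Psi d CARD('p) q A yh (\<lambda>j. R $ e j) = Inf {(1/2) * (\<Sum>k<d. (y k - yh k)\<^sup>2) | y.
        (\<forall>k\<ge>d. y k = 0) \<and> (\<forall>c<q. (\<Sum>k<d. M R c k * y k) = 0)}"
      unfolding M_def using A bound by (rule Psi_eq_Inf_band_mat)
    also have "\<dots> = (\<Sum>c<q. b R c * (\<Sum>c'<q. adj_mat (G R) $$ (c, c') * b R c')) / (2 * Determinant.det (G R))"
      unfolding G_def b_def using indep by (rule Inf_half_sq_dist_kernel_adj_mat)
    finally show "Psi d CARD('p) q A yh (\<lambda>j. R $ e j) =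
        (\<Sum>c<q. b R c * (\<Sum>c'<q. adj_mat (G R) $$ (c, c') * b R c')) / (2 * Determinant.det (G R))" .
  qed
qed

lemma strict_mono_block_offset:
  fixes w n :: nat
  assumes "w \<le> n"
  shows "strict_mono (\<lambda>c. c div w * n + c mod w)"
proof (rule strict_monoI)
  have offset: "c div w * n + c mod w = c + c div w * (n - w)" for c
  proof -
    have "c div w * n = c div w * w + c div w * (n - w)"
      using assms by (simp flip: add_mult_distrib2)
    then show ?thesis
      using div_mult_mod_eq[of c w] by linarith
  qed
  fix c c' :: nat assume "c < c'"
  then show "c div w * n + c mod w < c' div w * n + c' mod w"
    unfolding offset by (intro add_less_le_mono mult_le_mono1 div_le_mono) auto
qed

lemma block_offset_bound:
  fixes w n :: nat
  assumes "c < N * w" and "p + w \<le> n + 1"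
  shows "c div w * n + c mod w + p \<le> N * n"
proof -
  have "0 < w"
    using assms(1) by (cases w) auto
  then have "c div w < N" and "c mod w < w"
    using assms(1) by (simp_all add: less_mult_imp_div_less)
  then have "c div w * n + c mod w + p \<le> c div w * n + n"
    using assms(2) by linarith
  also have "\<dots> \<le> N * n"
    using \<open>c div w < N\<close> by (metis add.commute mult_Suc Suc_leI mult_le_mono1)
  finally show ?thesis .
qed

lemma smooth_on_Psi_hankel:
  fixes e :: "nat \<Rightarrow> 'p::finite"
  assumes e: "bij_betw e {0..<CARD('p)} (UNIV :: 'p set)" and card: "CARD('p) = l + 1" and "l < n"
  shows "smooth_on (UNIV - {0}) (\<lambda>R :: real^'p. Psi n (l + 1) (n - l) hankel yh (\<lambda>j. R $ e j))"
proof -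
  have "smooth_on (UNIV - {0}) (\<lambda>R :: real^'p. Psi n CARD('p) (n - l) hankel yh (\<lambda>j. R $ e j))"
    using e by (rule smooth_on_Psi_band_mat[where s = id])
      (use card \<open>l < n\<close> in \<open>auto simp: hankel_def strict_mono_on_def add.commute\<close>)
  then show ?thesis
    by (simp add: card)
qed

lemma smooth_on_Psi_block_hankel:
  fixes e :: "nat \<Rightarrow> 'p::finite"
  assumes e: "bij_betw e {0..<CARD('p)} (UNIV :: 'p set)" and card: "CARD('p) = r + 1" and "r < n"
  shows "smooth_on (UNIV - {0})
           (\<lambda>R :: real^'p. Psi (N * n) (r + 1) (N * (n - r)) (block_hankel n (r + 1)) yh (\<lambda>j. R $ e j))"
proof -
  define s where "s c = c div (n - r) * n + c mod (n - r)" for c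
  have "block_hankel n (r + 1) y j c = y (s c + j)" for y j c
    using \<open>r < n\<close> by (simp add: block_hankel_def hankel_def s_def Suc_diff_Suc add_ac)
  moreover have "s c + CARD('p) \<le> N * n" if "c < N * (n - r)" for c
    unfolding s_def card using that \<open>r < n\<close> by (intro block_offset_bound) auto
  moreover have "strict_mono_on {..<N * (n - r)} s"
    using strict_mono_block_offset[of "n - r" n] unfolding s_def
    by (simp add: strict_mono_def strict_mono_on_def)
  ultimately have "smooth_on (UNIV - {0}) (\<lambda>R :: real^'p.
      Psi (N * n) CARD('p) (N * (n - r)) (block_hankel n (r + 1)) yh (\<lambda>j. R $ e j))"
    using e by (intro smooth_on_Psi_band_mat) auto
  then show ?thesis
    by (simp add: card)
qed

theorem theorem4p2:
  fixes n N r :: nat and rs :: "nat \<Rightarrow> nat" and yhat :: "nat \<Rightarrow> real"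
    and e :: "nat \<Rightarrow> 'p::finite"
  assumes "n \<ge> 1" and "N \<ge> 1"
    and "\<forall>i\<in>{1..N}. 0 < rs i \<and> rs i \<le> r"
    and "0 < r" and "r \<le> (n - 1) div 2"
    and "bij_betw e {0..<CARD('p)} (UNIV :: 'p set)"
  shows "(\<forall>i\<in>{1..N}. CARD('p) = rs i + 1 \<longrightarrow>
            smooth_on (UNIV - {0})
              (\<lambda>R :: real^'p. Psi n (rs i + 1) (n - rs i) hankel yhat (\<lambda>j. R $ e j)))
       \<and> (CARD('p) = r + 1 \<longrightarrow>
            smooth_on (UNIV - {0})
              (\<lambda>R :: real^'p. Psi (N * n) (r + 1) (N * (n - r)) (block_hankel n (r + 1)) yhat
                                 (\<lambda>j. R $ e j)))"
proof -
  have "r < n"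
    using assms(1,5) by linarith
  have "rs i < n" if "i \<in> {1..N}" for i
    using assms(3) \<open>r < n\<close> that by fastforce
  then show ?thesis
    using assms(6) \<open>r < n\<close> smooth_on_Psi_hankel smooth_on_Psi_block_hankel by blast
qed

end
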